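(* Let $\Psi,\Omega\subseteq\mathbb{F}[x;\sigma,\delta]$ be finite non-empty sets of skew polynomials of degree at least $1$ such that $\Psi\le\Omega$. If $\Omega$ is P-independent, then so is $\Psi$.
   Context: Let $\mathbb{F}$ be a division ring, $\sigma$ a ring endomorphism of $\mathbb{F}$ and $\delta$ a $\sigma$-derivation; $\mathbb{F}[x;\sigma,\delta]$ is the skew polynomial ring with $xa=\sigma(a)x+\delta(a)$ (a domain with right Euclidean division). For sets $\Psi,\Omega$ of skew polynomials, $\Psi\le\Omega$ means: for every finite non-empty subset $\{Q_1,\dots,Q_n\}\subseteq\Psi$ of size $n$ there is a subset $\{P_1,\dots,P_n\}\subseteq\Omega$ of size $n$ with $Q_i$ dividing $P_i$ on the right for each $i$. For a set $\Omega$, $I(\Omega)$ is the left ideal of skew polynomials right-divisible by every element of $\Omega$, $F_\Omega$ its monic generator of minimal degree (or $0$). $\Omega$ is P-independent if it is finite, $I(\Omega)\neq\{0\}$, and $\deg F_\Omega=\sum_{P\in\Omega}\deg P$. *)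

theory Defs
  imports "HOL-Computational_Algebra.Polynomial"
begin

text \<open>Skew polynomial ring F[x;sigma,delta] over a division ring F, represented by
  coefficient polynomials (p = sum of p_i x^i, coefficients on the left), with the
  multiplication determined by x a = sigma(a) x + delta(a).\<close>

definition ring_endo :: "('a::division_ring \<Rightarrow> 'a) \<Rightarrow> bool" where
  "ring_endo \<sigma> \<longleftrightarrow> \<sigma> 1 = 1 \<and> (\<forall>a b. \<sigma> (a + b) = \<sigma> a + \<sigma> b) \<and> (\<forall>a b. \<sigma> (a * b) = \<sigma> a * \<sigma> b)"

definition sigma_derivation :: "('a::division_ring \<Rightarrow> 'a) \<Rightarrow> ('a \<Rightarrow> 'a) \<Rightarrow> bool" where
  "sigma_derivation \<sigma> \<delta> \<longleftrightarrow> (\<forall>a b. \<delta> (a + b) = \<delta> a + \<delta> b) \<and>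
      (\<forall>a b. \<delta> (a * b) = \<sigma> a * \<delta> b + \<delta> a * b)"

text \<open>Left multiplication by x: x (sum a_i x^i) = sum (sigma(a_i) x^(i+1) + delta(a_i) x^i).\<close>
definition skew_xmul :: "('a::division_ring \<Rightarrow> 'a) \<Rightarrow> ('a \<Rightarrow> 'a) \<Rightarrow> 'a poly \<Rightarrow> 'a poly" where
  "skew_xmul \<sigma> \<delta> q = pCons 0 (map_poly \<sigma> q) + map_poly \<delta> q"

definition skew_mult :: "('a::division_ring \<Rightarrow> 'a) \<Rightarrow> ('a \<Rightarrow> 'a) \<Rightarrow> 'a poly \<Rightarrow> 'a poly \<Rightarrow> 'a poly" where
  "skew_mult \<sigma> \<delta> p q = (\<Sum>i\<le>degree p. map_poly (\<lambda>b. coeff p i * b) ((skew_xmul \<sigma> \<delta> ^^ i) q))"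

definition skew_rdvd :: "('a::division_ring \<Rightarrow> 'a) \<Rightarrow> ('a \<Rightarrow> 'a) \<Rightarrow> 'a poly \<Rightarrow> 'a poly \<Rightarrow> bool" where
  "skew_rdvd \<sigma> \<delta> Q P \<longleftrightarrow> (\<exists>R. P = skew_mult \<sigma> \<delta> R Q)"

definition skew_le :: "('a::division_ring \<Rightarrow> 'a) \<Rightarrow> ('a \<Rightarrow> 'a) \<Rightarrow> 'a poly set \<Rightarrow> 'a poly set \<Rightarrow> bool" where
  "skew_le \<sigma> \<delta> \<Psi> \<Omega> \<longleftrightarrow> (\<forall>S. S \<subseteq> \<Psi> \<and> finite S \<and> S \<noteq> {} \<longrightarrow>
      (\<exists>T f. T \<subseteq> \<Omega> \<and> bij_betw f S T \<and> (\<forall>Q\<in>S. skew_rdvd \<sigma> \<delta> Q (f Q))))"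

definition skew_I :: "('a::division_ring \<Rightarrow> 'a) \<Rightarrow> ('a \<Rightarrow> 'a) \<Rightarrow> 'a poly set \<Rightarrow> 'a poly set" where
  "skew_I \<sigma> \<delta> \<Omega> = {F. \<forall>P\<in>\<Omega>. skew_rdvd \<sigma> \<delta> P F}"

definition skew_F :: "('a::division_ring \<Rightarrow> 'a) \<Rightarrow> ('a \<Rightarrow> 'a) \<Rightarrow> 'a poly set \<Rightarrow> 'a poly" where
  "skew_F \<sigma> \<delta> \<Omega> = (if skew_I \<sigma> \<delta> \<Omega> = {0} then 0 else
     (SOME F. F \<in> skew_I \<sigma> \<delta> \<Omega> \<and> lead_coeff F = 1 \<and>
        (\<forall>G\<in>skew_I \<sigma> \<delta> \<Omega>. G \<noteq> 0 \<longrightarrow> degree F \<le> degree G)))"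

definition P_independent :: "('a::division_ring \<Rightarrow> 'a) \<Rightarrow> ('a \<Rightarrow> 'a) \<Rightarrow> 'a poly set \<Rightarrow> bool" where
  "P_independent \<sigma> \<delta> \<Omega> \<longleftrightarrow> finite \<Omega> \<and> skew_I \<sigma> \<delta> \<Omega> \<noteq> {0} \<and>
     degree (skew_F \<sigma> \<delta> \<Omega>) = (\<Sum>P\<in>\<Omega>. degree P)"

end

theory Submission
  imports Defs
begin

text \<open>For nonzero skew polynomials the degree is additive and right division with remainder
  works, so any two nonzero B, C have a common left multiple U C = V B with deg U \<le> deg B.
  Hence adjoining P to a set S multiplies a nonzero L \<in> I(S) up to some nonzero element of
  I(S \<union> {P}) of degree \<le> deg L + deg P; and if Q right-divides P and L \<in> I(S \<union> {Q}), the
  multiple can be chosen in I(S \<union> {P}) with degree \<le> deg L + deg P - deg Q.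

  Now let \<Psi> \<le> \<Omega> be witnessed by an injection f : \<Psi> \<rightarrow> T \<subseteq> \<Omega> with Q right-dividing f Q,
  and write d(S) for the sum of the degrees of the elements of S. Exchanging the elements of \<Psi>
  one at a time in F(\<Psi>) and then adjoining \<Omega> - T yields a nonzero element of I(\<Omega>) of degree
  \<le> deg F(\<Psi>) - d(\<Psi>) + d(\<Omega>). As deg F(\<Omega>) = d(\<Omega>) is minimal in I(\<Omega>), this gives
  d(\<Psi>) \<le> deg F(\<Psi>); the reverse inequality holds for every finite set of nonzero polynomials.\<close>

(* Left scalar multiplication; the library's smult needs a commutative coefficient ring. *)
definition lscale :: "'a::division_ring \<Rightarrow> 'a poly \<Rightarrow> 'a poly" where
  "lscale c q = map_poly (\<lambda>b. c * b) q"

lemma coeff_lscale [simp]: "coeff (lscale c q) n = c * coeff q n"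
  by (simp add: lscale_def coeff_map_poly)

lemma lscale_add: "lscale c (p + q) = lscale c p + lscale c q"
  by (rule poly_eqI) (simp add: distrib_left)

lemma lscale_add_left: "lscale (a + b) q = lscale a q + lscale b q"
  by (rule poly_eqI) (simp add: distrib_right)

lemma lscale_0 [simp]: "lscale c 0 = 0"
  by (rule poly_eqI) simp

lemma lscale_0_left [simp]: "lscale 0 q = 0"
  by (rule poly_eqI) simp

lemma lscale_1 [simp]: "lscale 1 q = q"
  by (rule poly_eqI) simp

lemma lscale_lscale [simp]: "lscale c (lscale d q) = lscale (c * d) q"
  by (rule poly_eqI) (simp add: mult.assoc)

lemma lscale_pCons: "lscale c (pCons a p) = pCons (c * a) (lscale c p)"
  by (rule poly_eqI) (simp add: coeff_pCons split: nat.splits)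

lemma degree_lscale_le: "degree (lscale c q) \<le> degree q"
  by (rule degree_le) (simp add: coeff_eq_0)

locale skew_poly_ring =
  fixes \<sigma> \<delta> :: "'a::division_ring \<Rightarrow> 'a"
  assumes endo: "ring_endo \<sigma>" and deriv: "sigma_derivation \<sigma> \<delta>"
begin

abbreviation skew_times :: "'a poly \<Rightarrow> 'a poly \<Rightarrow> 'a poly" (infixl "\<star>" 70) where
  "p \<star> q \<equiv> skew_mult \<sigma> \<delta> p q"

abbreviation xmul :: "'a poly \<Rightarrow> 'a poly" where
  "xmul \<equiv> skew_xmul \<sigma> \<delta>"

abbreviation I :: "'a poly set \<Rightarrow> 'a poly set" where
  "I \<equiv> skew_I \<sigma> \<delta>"

subsection \<open>The ring laws\<close>

lemma sigma_add [simp]: "\<sigma> (a + b) = \<sigma> a + \<sigma> b"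
  and sigma_mult [simp]: "\<sigma> (a * b) = \<sigma> a * \<sigma> b"
  and sigma_one [simp]: "\<sigma> 1 = 1"
  using endo by (simp_all add: ring_endo_def)

lemma delta_add [simp]: "\<delta> (a + b) = \<delta> a + \<delta> b"
  and delta_mult [simp]: "\<delta> (a * b) = \<sigma> a * \<delta> b + \<delta> a * b"
  using deriv by (simp_all add: sigma_derivation_def)

lemma sigma_zero [simp]: "\<sigma> 0 = 0"
  using sigma_add[of 0 0] by simp

lemma delta_zero [simp]: "\<delta> 0 = 0"
  using delta_add[of 0 0] by simp

lemma delta_one [simp]: "\<delta> 1 = 0"
  using delta_mult[of 1 1] by simp

lemma sigma_eq_0_iff [simp]: "\<sigma> a = 0 \<longleftrightarrow> a = 0"
proof
  assume "\<sigma> a = 0"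
  show "a = 0"
  proof (rule ccontr)
    assume "a \<noteq> 0"
    then have "\<sigma> a * \<sigma> (inverse a) = 1"
      by (metis sigma_mult sigma_one right_inverse)
    with \<open>\<sigma> a = 0\<close> show False by simp
  qed
qed simp

lemma funpow_sigma_eq_0_iff [simp]: "(\<sigma> ^^ k) a = 0 \<longleftrightarrow> a = 0"
  by (induct k) auto

lemma coeff_xmul:
  "coeff (xmul q) n = (case n of 0 \<Rightarrow> 0 | Suc m \<Rightarrow> \<sigma> (coeff q m)) + \<delta> (coeff q n)"
  by (simp add: skew_xmul_def coeff_map_poly coeff_pCons split: nat.splits)

lemma xmul_add: "xmul (p + q) = xmul p + xmul q"
  by (rule poly_eqI) (simp add: coeff_xmul split: nat.splits)

lemma xmul_0 [simp]: "xmul 0 = 0"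
  by (simp add: skew_xmul_def)

lemma xmul_monom_one: "xmul (monom 1 i) = monom 1 (Suc i)"
  by (rule poly_eqI) (simp add: coeff_xmul split: nat.splits)

lemma xmul_lscale: "xmul (lscale c q) = lscale (\<sigma> c) (xmul q) + lscale (\<delta> c) q"
  by (rule poly_eqI) (simp add: coeff_xmul distrib_left split: nat.splits)

lemma skew_mult_conv_sum:
  assumes "degree p \<le> N"
  shows "p \<star> q = (\<Sum>i\<le>N. lscale (coeff p i) ((xmul ^^ i) q))"
  unfolding skew_mult_def lscale_def[symmetric]
  by (rule sum.mono_neutral_left) (use assms in \<open>auto simp: coeff_eq_0\<close>)

lemma skew_mult_0_left [simp]: "0 \<star> q = 0"
  using skew_mult_conv_sum[of 0 0 q] by simp

lemma skew_mult_pCons: "pCons a p \<star> q = lscale a q + p \<star> xmul q"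
proof -
  have "pCons a p \<star> q = (\<Sum>i\<le>Suc (degree p). lscale (coeff (pCons a p) i) ((xmul ^^ i) q))"
    by (rule skew_mult_conv_sum) (simp add: degree_pCons_le)
  also have "\<dots> = lscale a q + (\<Sum>i\<le>degree p. lscale (coeff p i) ((xmul ^^ i) (xmul q)))"
    unfolding sum.atMost_Suc_shift by (simp add: funpow_Suc_right del: funpow.simps)
  finally show ?thesis
    by (simp add: skew_mult_def lscale_def)
qed

lemma skew_mult_add_right: "p \<star> (q1 + q2) = p \<star> q1 + p \<star> q2"
  by (induct p arbitrary: q1 q2) (simp_all add: skew_mult_pCons xmul_add lscale_add algebra_simps)

lemma skew_mult_0_right [simp]: "p \<star> 0 = 0"
  by (induct p) (simp_all add: skew_mult_pCons)

lemma skew_mult_add_left: "(p1 + p2) \<star> q = p1 \<star> q + p2 \<star> q"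
proof (induct p1 arbitrary: p2 q)
  case (pCons a p)
  obtain b p' where "p2 = pCons b p'" by (rule pCons_cases)
  with pCons show ?case by (simp add: skew_mult_pCons lscale_add_left algebra_simps)
qed simp

lemma skew_mult_lscale_left: "lscale c p \<star> q = lscale c (p \<star> q)"
  by (induct p arbitrary: q) (simp_all add: skew_mult_pCons lscale_pCons lscale_add)

lemma skew_mult_one_left [simp]: "[:1:] \<star> q = q"
  by (simp add: skew_mult_pCons)

lemma skew_mult_xmul_left: "xmul p \<star> q = map_poly \<sigma> p \<star> xmul q + map_poly \<delta> p \<star> q"
  by (simp add: skew_xmul_def skew_mult_add_left skew_mult_pCons)

lemma skew_mult_one_right [simp]: "p \<star> [:1:] = p"
proof -
  have "(xmul ^^ i) [:1:] = monom 1 i" for i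
    by (induct i) (simp_all add: xmul_monom_one monom_0)
  then have "p \<star> [:1:] = (\<Sum>i\<le>degree p. monom (coeff p i) i)"
    by (simp add: skew_mult_def map_poly_monom)
  then show ?thesis by (simp add: poly_as_sum_of_monoms)
qed

lemma xmul_skew_mult: "xmul (p \<star> q) = xmul p \<star> q"
proof (induct p arbitrary: q)
  case (pCons a p)
  have "xmul (pCons a p \<star> q) = lscale (\<sigma> a) (xmul q) + lscale (\<delta> a) q + xmul p \<star> xmul q"
    using pCons by (simp add: skew_mult_pCons xmul_add xmul_lscale)
  also have "\<dots> = xmul (pCons a p) \<star> q"
    by (simp only: skew_mult_xmul_left map_poly_pCons sigma_zero delta_zero skew_mult_pCons)
      (simp add: algebra_simps)
  finally show ?case .
qed simp

lemma skew_mult_assoc: "(A \<star> B) \<star> C = A \<star> (B \<star> C)"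
  by (induct A arbitrary: B)
    (simp_all add: skew_mult_pCons skew_mult_add_left skew_mult_lscale_left xmul_skew_mult)

lemma degree_xmul: "q \<noteq> 0 \<Longrightarrow> degree (xmul q) = Suc (degree q)"
  and lead_coeff_xmul: "q \<noteq> 0 \<Longrightarrow> lead_coeff (xmul q) = \<sigma> (lead_coeff q)"
proof -
  assume "q \<noteq> 0"
  have top: "coeff (xmul q) (Suc (degree q)) = \<sigma> (lead_coeff q)"
    by (simp add: coeff_xmul coeff_eq_0)
  with \<open>q \<noteq> 0\<close> have "Suc (degree q) \<le> degree (xmul q)"
    by (metis le_degree sigma_eq_0_iff leading_coeff_0_iff)
  moreover have "degree (xmul q) \<le> Suc (degree q)"
    by (rule degree_le) (auto simp: coeff_xmul coeff_eq_0 split: nat.splits)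
  ultimately show deg: "degree (xmul q) = Suc (degree q)" by simp
  with top show "lead_coeff (xmul q) = \<sigma> (lead_coeff q)" by simp
qed

lemma degree_skew_mult_le_and_top_coeff:
  "degree (p \<star> q) \<le> degree p + degree q \<and>
   coeff (p \<star> q) (degree p + degree q) = lead_coeff p * (\<sigma> ^^ degree p) (lead_coeff q)"
proof (induct p arbitrary: q)
  case (pCons a p)
  show ?case
  proof (cases "q = 0 \<or> p = 0")
    case True
    then show ?thesis using degree_lscale_le[of a q] by (auto simp: skew_mult_pCons)
  next
    case False
    then have "q \<noteq> 0" "p \<noteq> 0" by auto
    have IH: "degree (p \<star> xmul q) \<le> degree p + Suc (degree q)"
      "coeff (p \<star> xmul q) (degree p + Suc (degree q)) =
         lead_coeff p * (\<sigma> ^^ Suc (degree p)) (lead_coeff q)"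
      using pCons(2)[of "xmul q"] degree_xmul[OF \<open>q \<noteq> 0\<close>] lead_coeff_xmul[OF \<open>q \<noteq> 0\<close>]
      by (simp_all add: funpow_Suc_right del: funpow.simps)
    have "degree (lscale a q) < degree p + Suc (degree q)"
      using degree_lscale_le[of a q] by simp
    with IH \<open>p \<noteq> 0\<close> show ?thesis
      by (simp add: skew_mult_pCons degree_add_le coeff_eq_0 del: funpow.simps)
  qed
qed simp

lemma skew_mult_nonzero:
  assumes "p \<noteq> 0" "q \<noteq> 0"
  shows "p \<star> q \<noteq> 0"
    and degree_skew_mult: "degree (p \<star> q) = degree p + degree q"
    and lead_coeff_skew_mult: "lead_coeff (p \<star> q) = lead_coeff p * (\<sigma> ^^ degree p) (lead_coeff q)"
proof -
  have top: "coeff (p \<star> q) (degree p + degree q) \<noteq> 0"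
    using degree_skew_mult_le_and_top_coeff[of p q] assms by simp
  then have "degree p + degree q \<le> degree (p \<star> q)" by (rule le_degree)
  then show deg: "degree (p \<star> q) = degree p + degree q"
    using degree_skew_mult_le_and_top_coeff[of p q] by simp
  show "p \<star> q \<noteq> 0" using top by auto
  show "lead_coeff (p \<star> q) = lead_coeff p * (\<sigma> ^^ degree p) (lead_coeff q)"
    using deg degree_skew_mult_le_and_top_coeff[of p q] by simp
qed

subsection \<open>Right division and common left multiples\<close>

lemma skew_cancel_lead_term:
  assumes "B \<noteq> 0" "C \<noteq> 0" "degree B \<le> degree C"
  shows "\<exists>A. C - A \<star> B = 0 \<or> degree (C - A \<star> B) < degree C"
proof -
  define k where "k = degree C - degree B"
  define c where "c = lead_coeff C * inverse ((\<sigma> ^^ k) (lead_coeff B))"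
  have "c \<noteq> 0" using assms by (simp add: c_def)
  then have mono: "monom c k \<noteq> 0" "degree (monom c k) = k"
    by (simp_all add: degree_monom_eq)
  have deg: "degree (monom c k \<star> B) = degree C"
    using degree_skew_mult[OF mono(1) assms(1)] mono(2) assms(3) by (simp add: k_def)
  have "lead_coeff (monom c k \<star> B) = c * (\<sigma> ^^ k) (lead_coeff B)"
    using lead_coeff_skew_mult[OF mono(1) assms(1)] mono(2) by simp
  also have "\<dots> = lead_coeff C"
    using assms(1) by (simp add: c_def mult.assoc)
  finally have "coeff (C - monom c k \<star> B) (degree C) = 0"
    using deg by simp
  moreover have "degree (C - monom c k \<star> B) \<le> degree C"
    using deg by (simp add: degree_diff_le)
  ultimately show ?thesis
    by (metis le_neq_implies_less leading_coeff_0_iff)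
qed

lemma skew_division:
  assumes "B \<noteq> 0"
  shows "\<exists>A r. C = A \<star> B + r \<and> (r = 0 \<or> degree r < degree B)"
proof (induct "degree C" arbitrary: C rule: less_induct)
  case less
  show ?case
  proof (cases "C = 0 \<or> degree C < degree B")
    case True
    then show ?thesis by (intro exI[of _ 0] exI[of _ C]) auto
  next
    case False
    then have "C \<noteq> 0" "degree B \<le> degree C" by auto
    then obtain A where "C - A \<star> B = 0 \<or> degree (C - A \<star> B) < degree C"
      using skew_cancel_lead_term[OF assms] by blast
    then show ?thesis
    proof
      assume "C - A \<star> B = 0"
      then show ?thesis by (intro exI[of _ A] exI[of _ 0]) simp
    next
      assume "degree (C - A \<star> B) < degree C"
      from less[OF this] obtain A' r where
        "C - A \<star> B = A' \<star> B + r" "r = 0 \<or> degree r < degree B" by blast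
      then have "C = (A + A') \<star> B + r"
        by (simp add: skew_mult_add_left algebra_simps)
      with \<open>r = 0 \<or> degree r < degree B\<close> show ?thesis by blast
    qed
  qed
qed

lemma skew_common_left_multiple:
  assumes "C \<noteq> 0" "B \<noteq> 0"
  shows "\<exists>U V. U \<noteq> 0 \<and> U \<star> C = V \<star> B \<and> degree U \<le> degree B"
  using assms
proof (induct "degree B" arbitrary: B C rule: less_induct)
  case less
  obtain A r where div: "C = A \<star> B + r" and r: "r = 0 \<or> degree r < degree B"
    using skew_division[OF less(3)] by blast
  show ?case
  proof (cases "r = 0")
    case True
    with div show ?thesis by (intro exI[of _ "[:1:]"] exI[of _ A]) simp
  next
    case False
    with r have "degree r < degree B" by simp
    from less(1)[OF this less(3) False] obtain U V where
      UV: "U \<noteq> 0" "U \<star> B = V \<star> r" "degree U \<le> degree r" by blast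
    have "V \<noteq> 0"
      using UV skew_mult_nonzero(1)[OF UV(1) less(3)] by auto
    then have "degree U + degree B = degree V + degree r"
      using degree_skew_mult[OF UV(1) less(3)] degree_skew_mult[OF _ False] UV(2) by simp
    with UV(3) have "degree V \<le> degree B" by linarith
    moreover have "V \<star> C = (V \<star> A + U) \<star> B"
      using UV(2) by (simp add: div skew_mult_add_right skew_mult_add_left skew_mult_assoc)
    ultimately show ?thesis using \<open>V \<noteq> 0\<close> by blast
  qed
qed

subsection \<open>The ideals I(S) and their minimal generators\<close>

lemma skew_rdvd_mult_left: "skew_rdvd \<sigma> \<delta> P F \<Longrightarrow> skew_rdvd \<sigma> \<delta> P (U \<star> F)"
  unfolding skew_rdvd_def by (metis skew_mult_assoc)

lemma skew_I_mult_left: "F \<in> I S \<Longrightarrow> U \<star> F \<in> I S"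
  unfolding skew_I_def by (auto intro: skew_rdvd_mult_left)

lemma skew_I_insert_exchange:
  assumes "L \<in> I (insert Q S)" "L \<noteq> 0" "Q \<noteq> 0" "P \<noteq> 0" "skew_rdvd \<sigma> \<delta> Q P"
  shows "\<exists>M\<in>I (insert P S). M \<noteq> 0 \<and> degree M + degree Q \<le> degree L + degree P"
proof -
  obtain B where P: "P = B \<star> Q" using assms(5) by (auto simp: skew_rdvd_def)
  obtain C where L: "L = C \<star> Q" using assms(1) by (auto simp: skew_I_def skew_rdvd_def)
  have "B \<noteq> 0" "C \<noteq> 0" using P L assms(2,4) by auto
  then obtain U V where UV: "U \<noteq> 0" "U \<star> C = V \<star> B" "degree U \<le> degree B"
    using skew_common_left_multiple by blast
  have "U \<star> L \<in> I S"
    using assms(1) skew_I_mult_left[of L S U] by (simp add: skew_I_def)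
  moreover have "U \<star> L = V \<star> P"
    using UV(2) by (simp add: L P skew_mult_assoc[symmetric])
  ultimately have "U \<star> L \<in> I (insert P S)"
    by (auto simp: skew_I_def skew_rdvd_def)
  moreover have "U \<star> L \<noteq> 0" "degree (U \<star> L) = degree U + degree L"
    using skew_mult_nonzero[OF UV(1) assms(2)] by auto
  moreover have "degree P = degree B + degree Q"
    using degree_skew_mult[OF \<open>B \<noteq> 0\<close> assms(3)] P by simp
  ultimately show ?thesis using UV(3) by (intro bexI[of _ "U \<star> L"]) auto
qed

lemma skew_I_insert:
  assumes "L \<in> I S" "L \<noteq> 0" "P \<noteq> 0"
  shows "\<exists>M\<in>I (insert P S). M \<noteq> 0 \<and> degree M \<le> degree L + degree P"
proof -
  have one_rdvd: "skew_rdvd \<sigma> \<delta> [:1:] F" for F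
    unfolding skew_rdvd_def by (metis skew_mult_one_right)
  then have "L \<in> I (insert [:1:] S)"
    using assms(1) by (simp add: skew_I_def)
  then show ?thesis
    using skew_I_insert_exchange[OF _ assms(2) _ assms(3) one_rdvd] by fastforce
qed

lemma skew_I_union:
  assumes "finite Z" "0 \<notin> Z" "L \<in> I Y" "L \<noteq> 0"
  shows "\<exists>M\<in>I (Y \<union> Z). M \<noteq> 0 \<and> degree M \<le> degree L + (\<Sum>P\<in>Z. degree P)"
  using assms
proof (induct Z rule: finite_induct)
  case (insert P Z)
  then obtain M where M: "M \<in> I (Y \<union> Z)" "M \<noteq> 0" "degree M \<le> degree L + (\<Sum>P\<in>Z. degree P)"
    by auto
  from skew_I_insert[OF M(1,2)] insert(4) obtain M' where
    "M' \<in> I (insert P (Y \<union> Z))" "M' \<noteq> 0" "degree M' \<le> degree M + degree P" by auto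
  with M(3) insert(1,2) show ?case by (intro bexI[of _ M']) auto
qed auto

lemma skew_I_exchange:
  assumes "finite \<Psi>" "\<forall>Q\<in>\<Psi>. Q \<noteq> 0 \<and> f Q \<noteq> 0 \<and> skew_rdvd \<sigma> \<delta> Q (f Q)"
    "L \<in> I (X \<union> \<Psi>)" "L \<noteq> 0"
  shows "\<exists>M\<in>I (X \<union> f ` \<Psi>). M \<noteq> 0 \<and>
           degree M + (\<Sum>Q\<in>\<Psi>. degree Q) \<le> degree L + (\<Sum>Q\<in>\<Psi>. degree (f Q))"
  using assms
proof (induct \<Psi> arbitrary: X rule: finite_induct)
  case (insert Q \<Psi>)
  have "L \<in> I (insert Q X \<union> \<Psi>)" using insert(5) by simp
  from insert(3)[OF _ this insert(6)] insert(4) obtain M where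
    M: "M \<in> I (insert Q (X \<union> f ` \<Psi>))" "M \<noteq> 0"
       "degree M + (\<Sum>Q\<in>\<Psi>. degree Q) \<le> degree L + (\<Sum>Q\<in>\<Psi>. degree (f Q))"
    by auto
  from skew_I_insert_exchange[OF M(1,2)] insert(4) obtain M' where
    "M' \<in> I (insert (f Q) (X \<union> f ` \<Psi>))" "M' \<noteq> 0"
    "degree M' + degree Q \<le> degree M + degree (f Q)" by auto
  with M(3) insert(1,2) show ?case by (intro bexI[of _ M']) auto
qed auto

lemma skew_F_minimal:
  assumes "G \<in> I S" "G \<noteq> 0"
  shows "skew_F \<sigma> \<delta> S \<in> I S" "lead_coeff (skew_F \<sigma> \<delta> S) = 1"
    "\<And>G'. G' \<in> I S \<Longrightarrow> G' \<noteq> 0 \<Longrightarrow> degree (skew_F \<sigma> \<delta> S) \<le> degree G'"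
proof -
  obtain G0 where G0: "G0 \<in> I S" "G0 \<noteq> 0"
    and least: "\<forall>G'. G' \<in> I S \<and> G' \<noteq> 0 \<longrightarrow> degree G0 \<le> degree G'"
    using ex_has_least_nat[of "\<lambda>G. G \<in> I S \<and> G \<noteq> 0" G degree] assms by blast
  define c where "c = inverse (lead_coeff G0)"
  have "c \<noteq> 0" using G0(2) by (simp add: c_def)
  then have "[:c:] \<star> G0 \<noteq> 0" "degree ([:c:] \<star> G0) = degree G0"
    and "lead_coeff ([:c:] \<star> G0) = 1"
    using skew_mult_nonzero[of "[:c:]" G0] G0(2) by (auto simp: c_def)
  with G0 least skew_I_mult_left have "\<exists>F. F \<in> I S \<and> lead_coeff F = 1 \<and>
      (\<forall>G\<in>I S. G \<noteq> 0 \<longrightarrow> degree F \<le> degree G)"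
    by (intro exI[of _ "[:c:] \<star> G0"]) auto
  moreover have "I S \<noteq> {0}" using assms by auto
  ultimately have "skew_F \<sigma> \<delta> S \<in> I S \<and> lead_coeff (skew_F \<sigma> \<delta> S) = 1 \<and>
      (\<forall>G\<in>I S. G \<noteq> 0 \<longrightarrow> degree (skew_F \<sigma> \<delta> S) \<le> degree G)"
    unfolding skew_F_def using someI_ex by simp
  then show "skew_F \<sigma> \<delta> S \<in> I S" "lead_coeff (skew_F \<sigma> \<delta> S) = 1"
    "\<And>G'. G' \<in> I S \<Longrightarrow> G' \<noteq> 0 \<Longrightarrow> degree (skew_F \<sigma> \<delta> S) \<le> degree G'"
    by auto
qed

lemma skew_F_nonzero_and_degree_le_sum:
  assumes "finite S" "0 \<notin> S"
  shows "I S \<noteq> {0}" "skew_F \<sigma> \<delta> S \<in> I S" "skew_F \<sigma> \<delta> S \<noteq> 0" "degree (skew_F \<sigma> \<delta> S) \<le> (\<Sum>P\<in>S. degree P)"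
proof -
  have "[:1:] \<in> I {}" by (simp add: skew_I_def)
  from skew_I_union[OF assms this] obtain M where
    M: "M \<in> I S" "M \<noteq> 0" "degree M \<le> (\<Sum>P\<in>S. degree P)" by auto
  then show "I S \<noteq> {0}" by auto
  show "skew_F \<sigma> \<delta> S \<in> I S" using skew_F_minimal(1)[OF M(1,2)] .
  show "skew_F \<sigma> \<delta> S \<noteq> 0" using skew_F_minimal(2)[OF M(1,2)] by auto
  show "degree (skew_F \<sigma> \<delta> S) \<le> (\<Sum>P\<in>S. degree P)"
    using skew_F_minimal(3)[OF M(1,2) M(1,2)] M(3) by simp
qed

lemma degree_skew_F_exchange:
  assumes "finite \<Psi>" "finite \<Omega>" "0 \<notin> \<Psi>" "0 \<notin> \<Omega>"
    and "T \<subseteq> \<Omega>" "bij_betw f \<Psi> T" "\<forall>Q\<in>\<Psi>. skew_rdvd \<sigma> \<delta> Q (f Q)"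
  shows "degree (skew_F \<sigma> \<delta> \<Omega>) + (\<Sum>Q\<in>\<Psi>. degree Q) \<le>
         degree (skew_F \<sigma> \<delta> \<Psi>) + (\<Sum>P\<in>\<Omega>. degree P)"
proof -
  let ?F = "skew_F \<sigma> \<delta> \<Psi>"
  have F: "?F \<in> I ({} \<union> \<Psi>)" "?F \<noteq> 0"
    using skew_F_nonzero_and_degree_le_sum[OF assms(1,3)] by auto
  have "f ` \<Psi> = T" "\<forall>Q\<in>\<Psi>. Q \<noteq> 0 \<and> f Q \<noteq> 0 \<and> skew_rdvd \<sigma> \<delta> Q (f Q)"
    using assms(3-7) by (auto simp: bij_betw_def)
  from skew_I_exchange[OF assms(1) this(2) F] this(1) obtain M where
    M: "M \<in> I T" "M \<noteq> 0" "degree M + (\<Sum>Q\<in>\<Psi>. degree Q) \<le> degree ?F + (\<Sum>Q\<in>\<Psi>. degree (f Q))"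
    by auto
  have "finite (\<Omega> - T)" "0 \<notin> \<Omega> - T" "T \<union> (\<Omega> - T) = \<Omega>"
    using assms(2,4,5) by auto
  with skew_I_union[OF this(1,2) M(1,2)] obtain M' where
    M': "M' \<in> I \<Omega>" "M' \<noteq> 0" "degree M' \<le> degree M + (\<Sum>P\<in>\<Omega> - T. degree P)"
    by auto
  have "(\<Sum>Q\<in>\<Psi>. degree (f Q)) = (\<Sum>P\<in>T. degree P)"
    using sum.reindex_bij_betw[OF assms(6)] by simp
  moreover have "(\<Sum>P\<in>\<Omega>. degree P) = (\<Sum>P\<in>T. degree P) + (\<Sum>P\<in>\<Omega> - T. degree P)"
    using sum.subset_diff[OF assms(5,2)] by (simp add: add.commute)
  moreover have "degree (skew_F \<sigma> \<delta> \<Omega>) \<le> degree M'"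
    using skew_F_minimal(3)[OF M'(1,2) M'(1,2)] .
  ultimately show ?thesis using M(3) M'(3) by linarith
qed

end

theorem mainTheorem4:
  fixes \<sigma> \<delta> :: "'a::division_ring \<Rightarrow> 'a"
    and \<Psi> \<Omega> :: "'a poly set"
  assumes "ring_endo \<sigma>"
    and "sigma_derivation \<sigma> \<delta>"
    and "finite \<Psi>" and "\<Psi> \<noteq> {}" and "finite \<Omega>" and "\<Omega> \<noteq> {}"
    and "\<forall>Q\<in>\<Psi>. degree Q \<ge> 1" and "\<forall>P\<in>\<Omega>. degree P \<ge> 1"
    and "skew_le \<sigma> \<delta> \<Psi> \<Omega>"
    and "P_independent \<sigma> \<delta> \<Omega>"
  shows "P_independent \<sigma> \<delta> \<Psi>"
proof -
  interpret skew_poly_ring \<sigma> \<delta> using assms(1,2) by unfold_locales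
  have "0 \<notin> \<Psi>" "0 \<notin> \<Omega>" using assms(7,8) by auto
  obtain T f where "T \<subseteq> \<Omega>" "bij_betw f \<Psi> T" "\<forall>Q\<in>\<Psi>. skew_rdvd \<sigma> \<delta> Q (f Q)"
    using assms(9) assms(3,4) unfolding skew_le_def by (meson order_refl)
  from degree_skew_F_exchange[OF assms(3,5) \<open>0 \<notin> \<Psi>\<close> \<open>0 \<notin> \<Omega>\<close> this] assms(10)
  have "(\<Sum>Q\<in>\<Psi>. degree Q) \<le> degree (skew_F \<sigma> \<delta> \<Psi>)"
    by (simp add: P_independent_def)
  with skew_F_nonzero_and_degree_le_sum[OF assms(3) \<open>0 \<notin> \<Psi>\<close>] assms(3)
  show ?thesis by (simp add: P_independent_def)
qed

end
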